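(* Let $\gamma \in (0,1/6]$, let $n \geq 2$ be an integer, and let $\eta \geq \eta_1 := \max\{n, \frac{32}{\gamma^2}\log(3/\gamma)\}$. Then there exists a dataset $x_1,\dots,x_n$ (in $\mathbb{R}^d$ for some $d$) with $\|x_i\|\le 1$ for all $i$, linearly separable with maximum margin $\gamma$, such that gradient descent with step size $\eta$ on this dataset satisfies $F(w_t) > 2/\eta$ for all integers $0 \le t \leq 1 + \frac{1}{59\gamma^2}$.
   Context: All labels are $+1$. Linear separability: some $w$ has $\langle w,x_i\rangle>0$ for all $i$. Maximum margin: $\max_{\|w\|=1}\min_i\langle w,x_i\rangle$. Loss $F(w) = \frac{1}{n}\sum_{i=1}^n \log(1+\exp(-\langle w, x_i\rangle))$. Gradient descent with constant step size $\eta$: $w_0 = 0$, $w_{t+1} = w_t - \eta\nabla F(w_t)$. *)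

theory Defs
  imports "HOL-Analysis.Analysis"
begin

text \<open>Vectors in R^d are represented as functions nat => real; only the
  coordinates j < d matter. A dataset of n points is x :: nat => (nat => real),
  with points x 0, ..., x (n-1). All labels are +1.\<close>

definition ip :: "nat \<Rightarrow> (nat \<Rightarrow> real) \<Rightarrow> (nat \<Rightarrow> real) \<Rightarrow> real" where
  "ip d u v = (\<Sum>j<d. u j * v j)"

definition vnorm :: "nat \<Rightarrow> (nat \<Rightarrow> real) \<Rightarrow> real" where
  "vnorm d u = sqrt (ip d u u)"

definition logloss :: "nat \<Rightarrow> nat \<Rightarrow> (nat \<Rightarrow> nat \<Rightarrow> real) \<Rightarrow> (nat \<Rightarrow> real) \<Rightarrow> real" where
  "logloss d n x w = (1 / real n) * (\<Sum>i<n. ln (1 + exp (- ip d w (x i))))"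

definition logloss_grad :: "nat \<Rightarrow> nat \<Rightarrow> (nat \<Rightarrow> nat \<Rightarrow> real) \<Rightarrow> (nat \<Rightarrow> real) \<Rightarrow> (nat \<Rightarrow> real)" where
  "logloss_grad d n x w = (\<lambda>j. if j < d then
      - (1 / real n) * (\<Sum>i<n. x i j * (exp (- ip d w (x i)) / (1 + exp (- ip d w (x i)))))
    else 0)"

fun gd :: "nat \<Rightarrow> nat \<Rightarrow> (nat \<Rightarrow> nat \<Rightarrow> real) \<Rightarrow> real \<Rightarrow> nat \<Rightarrow> (nat \<Rightarrow> real)" where
  "gd d n x eta 0 = (\<lambda>j. 0)"
| "gd d n x eta (Suc t) = (\<lambda>j. gd d n x eta t j - eta * logloss_grad d n x (gd d n x eta t) j)"

definition lin_separable :: "nat \<Rightarrow> nat \<Rightarrow> (nat \<Rightarrow> nat \<Rightarrow> real) \<Rightarrow> bool" where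
  "lin_separable d n x \<longleftrightarrow> (\<exists>w. \<forall>i<n. ip d w (x i) > 0)"

text \<open>Maximum margin: max over unit w of min_i <w,x_i> (written as a supremum;
  the maximum is attained by compactness of the unit sphere).\<close>
definition max_margin :: "nat \<Rightarrow> nat \<Rightarrow> (nat \<Rightarrow> nat \<Rightarrow> real) \<Rightarrow> real" where
  "max_margin d n x = (SUP w\<in>{w. vnorm d w = 1}. Min ((\<lambda>i. ip d w (x i)) ` {..<n}))"

end

theory Submission
  imports Defs
begin

text \<open>Take the planar dataset with \<open>\<lfloor>n/2\<rfloor>\<close> copies each of \<open>(\<gamma>, 1/2 + 8\<gamma>\<^sup>2)\<close> and
  \<open>(\<gamma>, -1/2)\<close>, plus \<open>(\<gamma>, 0)\<close> if n is odd; every point has first coordinate \<open>\<gamma>\<close>, so the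
  maximum margin is \<open>\<gamma>\<close>, attained by the first unit vector. Write \<open>w\<^sub>t = (U\<^sub>t, V\<^sub>t)\<close>.
  Since \<open>\<eta>\<close> is huge, every margin \<open>m\<close> that occurs has \<open>|m| \<ge> L = \<eta>\<gamma>\<^sup>2/12\<close>, so each
  loss weight \<open>exp(-m)/(1+exp(-m))\<close> is within \<open>\<epsilon> = exp(-L) \<le> \<gamma>\<^sup>2/12\<close> of 0 or 1. Then
  \<open>V\<^sub>t\<close> oscillates: with \<open>p = \<lfloor>n/2\<rfloor>/n\<close>, after an odd number of steps \<open>V\<^sub>t \<approx> 4\<eta>p\<gamma>\<^sup>2t > 0\<close> and the points
  \<open>(\<gamma>, -1/2)\<close> have margin \<open>\<le> -L\<close>; after an even number \<open>V\<^sub>t \<approx> 4\<eta>p\<gamma>\<^sup>2(t-1) - \<eta>p/2 < 0\<close>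
  and the points \<open>(\<gamma>, 1/2 + 8\<gamma>\<^sup>2)\<close> have margin \<open>\<le> -L\<close>. The even case needs
  only that the drift \<open>\<gamma>U\<^sub>t \<approx> \<eta>p\<gamma>\<^sup>2t\<close> stays small against \<open>\<eta>p\<close>, which is the case for
  \<open>t \<le> 1 + 1/(59\<gamma>\<^sup>2)\<close>. A point of margin \<open>\<le> -L \<le> -2\<close> alone contributes loss \<open>> 2\<close>,
  so \<open>F(w\<^sub>t) > 2/n \<ge> 2/\<eta>\<close>.\<close>

definition logistic_weight :: "real \<Rightarrow> real" where
  "logistic_weight m = exp (-m) / (1 + exp (-m))"

lemma logistic_weight_nonneg: "0 \<le> logistic_weight m"
  unfolding logistic_weight_def by (simp add: add_pos_pos)

lemma logistic_weight_le_one: "logistic_weight m \<le> 1"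
  unfolding logistic_weight_def by (simp add: add_pos_pos)

lemma logistic_weight_zero [simp]: "logistic_weight 0 = 1/2"
  unfolding logistic_weight_def by simp

lemma logistic_weight_le_exp:
  assumes "a \<le> m"
  shows "logistic_weight m \<le> exp (-a)"
proof -
  have "logistic_weight m \<le> exp (-m)"
    unfolding logistic_weight_def by (simp add: divide_le_eq add_pos_pos)
  also have "\<dots> \<le> exp (-a)" using assms by simp
  finally show ?thesis .
qed

lemma logistic_weight_ge_one_minus_exp:
  assumes "m \<le> -a"
  shows "1 - exp (-a) \<le> logistic_weight m"
proof -
  have "0 < 1 + exp m" by (simp add: add_pos_pos)
  then have "1 - logistic_weight m = logistic_weight (-m)"
    unfolding logistic_weight_def exp_minus by (simp add: field_simps)
  also have "\<dots> \<le> exp (-a)" using assms by (intro logistic_weight_le_exp) simp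
  finally show ?thesis by simp
qed

lemma abs_logistic_weight_le_exp: "a \<le> m \<Longrightarrow> \<bar>logistic_weight m\<bar> \<le> exp (-a)"
  using logistic_weight_le_exp logistic_weight_nonneg by simp

lemma abs_logistic_weight_sub_one_le_exp: "m \<le> -a \<Longrightarrow> \<bar>logistic_weight m - 1\<bar> \<le> exp (-a)"
  using logistic_weight_ge_one_minus_exp[of m a] logistic_weight_le_one[of m] by (simp add: abs_le_iff)

lemma logloss_grad_eq:
  "j < d \<Longrightarrow> logloss_grad d n x w j = -(1 / real n) * (\<Sum>i<n. x i j * logistic_weight (ip d w (x i)))"
  unfolding logloss_grad_def logistic_weight_def by simp

lemma logloss_zero:
  assumes "0 < n"
  shows "logloss d n x (\<lambda>j. 0) = ln 2"
  using assms unfolding logloss_def ip_def by simp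

lemma logloss_gt_of_margin_le:
  assumes "i < n" and "ip d w (x i) \<le> -a"
  shows "a / real n < logloss d n x w"
proof -
  let ?f = "\<lambda>i. ln (1 + exp (- ip d w (x i)))"
  have "a \<le> ln (exp (- ip d w (x i)))" using assms(2) by simp
  also have "\<dots> < ?f i" by (subst ln_less_cancel_iff) (simp_all add: add_pos_pos)
  also have "\<dots> \<le> sum ?f {..<n}" by (rule member_le_sum) (use assms(1) in auto)
  finally show ?thesis using assms(1) unfolding logloss_def by (simp add: divide_strict_right_mono)
qed

lemma ip_two: "ip 2 u v = u 0 * v 0 + u 1 * v 1"
  unfolding ip_def by (simp add: numeral_2_eq_2)

definition vec2 :: "real \<Rightarrow> real \<Rightarrow> nat \<Rightarrow> real" where
  "vec2 a b = (\<lambda>j. if j = 0 then a else if j = 1 then b else 0)"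

lemma vec2_simps [simp]: "vec2 a b 0 = a" "vec2 a b 1 = b" "vec2 a b (Suc 0) = b"
  unfolding vec2_def by simp_all

lemma ip_vec2 [simp]: "ip 2 w (vec2 a b) = a * w 0 + b * w 1"
  unfolding ip_two by simp

lemma vnorm_vec2: "vnorm 2 (vec2 a b) = sqrt (a^2 + b^2)"
  unfolding vnorm_def ip_two by (simp add: power2_eq_square)

lemma lin_separable_of_first_coord:
  assumes "0 < g" and "\<forall>i<n. x i 0 = g"
  shows "lin_separable 2 n x"
  unfolding lin_separable_def
  using assms by (intro exI[of _ "vec2 1 0"]) (simp add: ip_two)

lemma max_margin_of_first_coord:
  assumes "0 \<le> g" and first: "\<forall>i<n. x i 0 = g"
    and "i < n" and "0 \<le> x i 1" and "i' < n" and "x i' 1 \<le> 0"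
  shows "max_margin 2 n x = g"
  unfolding max_margin_def
proof (rule cSup_eq_maximum)
  have "(\<lambda>i. ip 2 (vec2 1 0) (x i)) ` {..<n} = {g}"
    using first \<open>i < n\<close> by (auto simp: ip_two)
  then show "g \<in> (\<lambda>w. Min ((\<lambda>i. ip 2 w (x i)) ` {..<n})) ` {w. vnorm 2 w = 1}"
    by (intro image_eqI[of _ _ "vec2 1 0"]) (auto simp: vnorm_vec2)
next
  fix z assume "z \<in> (\<lambda>w. Min ((\<lambda>i. ip 2 w (x i)) ` {..<n})) ` {w. vnorm 2 w = 1}"
  then obtain w where w: "vnorm 2 w = 1" and z: "z = Min ((\<lambda>i. ip 2 w (x i)) ` {..<n})" by auto
  have "(w 0)^2 + (w 1)^2 = 1" using w unfolding vnorm_def ip_two by (simp add: power2_eq_square)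
  then have "(w 0)^2 \<le> 1" using zero_le_power2[of "w 1"] by linarith
  then have "w 0 \<le> 1" by (simp add: abs_square_le_1)
  have "z \<le> ip 2 w (x j)" if "j < n" for j unfolding z using that by (intro Min_le) auto
  then have "z \<le> g * w 0 + x i 1 * w 1" "z \<le> g * w 0 + x i' 1 * w 1"
    using first \<open>i < n\<close> \<open>i' < n\<close> by (auto simp: ip_two mult.commute)
  moreover have "x i 1 * w 1 \<le> 0 \<or> x i' 1 * w 1 \<le> 0"
    using \<open>0 \<le> x i 1\<close> \<open>x i' 1 \<le> 0\<close> by (cases "0 \<le> w 1") (auto simp: mult_nonneg_nonpos mult_nonpos_nonneg)
  moreover have "g * w 0 \<le> g" using \<open>w 0 \<le> 1\<close> \<open>0 \<le> g\<close> by (simp add: mult_left_le)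
  ultimately show "z \<le> g" by linarith
qed

text \<open>\<open>u t\<close> is \<open>g\<close> times the first and \<open>v t\<close> the second coordinate of the \<open>t\<close>-th
  gradient descent iterate on a dataset whose points \<open>(g, c)\<close>, \<open>(g, -1/2)\<close> and \<open>(g, 0)\<close>
  make up the fractions \<open>p\<close>, \<open>p\<close> and \<open>w\<close> of the data.\<close>

locale oscillating_gd =
  fixes g eta p w c :: real and u v :: "nat \<Rightarrow> real"
  assumes g_pos: "0 < g" and g_le: "g \<le> 1/6"
    and p_ge: "1/3 \<le> p" and w_nonneg: "0 \<le> w" and weights_sum: "2*p + w = 1"
    and c_eq: "c = 1/2 + 8*g^2"
    and eta_large: "24 \<le> eta*g^2"
    and exp_small: "exp (-(eta*g^2/12)) \<le> g^2/12"
    and u_0: "u 0 = 0" and v_0: "v 0 = 0"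
    and u_Suc: "\<And>t. u (Suc t) = u t + eta*g^2 * (p * logistic_weight (u t + c * v t)
                   + p * logistic_weight (u t - v t / 2) + w * logistic_weight (u t))"
    and v_Suc: "\<And>t. v (Suc t) = v t + eta*p * (c * logistic_weight (u t + c * v t)
                   - logistic_weight (u t - v t / 2) / 2)"
begin

abbreviation "L \<equiv> eta*g^2/12"
abbreviation "eps \<equiv> exp (-L)"
abbreviation "horizon \<equiv> 1 + 1 / (59*g^2)"

lemma eps_pos: "0 < eps" by simp

lemma g_sq_le: "g^2 \<le> 1/36"
proof -
  have "g^2 \<le> (1/6)^2" using g_pos g_le by (intro power_mono) auto
  then show ?thesis by (simp add: power2_eq_square)
qed

lemma eta_pos: "0 < eta"
proof -
  have "0 < eta*g^2" using eta_large by linarith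
  then show ?thesis using g_pos by (simp add: zero_less_mult_iff)
qed

lemma L_pos: "0 < L" using eta_pos g_pos by simp

lemma eta_p_pos: "0 < eta*p" using eta_pos p_ge by simp

lemma c_bounds: "1/2 \<le> c" "c \<le> 1"
  using c_eq g_sq_le by auto

lemma p_le: "p \<le> 1/2" and w_le: "w \<le> 1/3"
  using weights_sum w_nonneg p_ge by auto

definition v_center :: "nat \<Rightarrow> real" where
  "v_center t = eta*p * (4*g^2*real t - (if even t then 4*g^2 + 1/2 else 0))"

definition invariant :: "nat \<Rightarrow> bool" where
  "invariant t \<longleftrightarrow> L \<le> u t \<and> u t \<le> eta*g^2 * (p * real t + w/2 + real t * eps)
     \<and> \<bar>v t - v_center t\<bar> \<le> 2*eta*p * real t * eps"

lemma v_center_Suc: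
  "v_center (Suc t) = v_center t + eta*p * (c * of_bool (even t) - of_bool (odd t) / 2)"
  unfolding v_center_def c_eq by (simp add: algebra_simps)

lemma invariant_one: "invariant 1"
proof -
  have u1: "u 1 = eta*g^2 * (p + w/2)" using u_Suc[of 0] by (simp add: u_0 v_0 algebra_simps)
  have v1: "v 1 = v_center 1" using v_Suc[of 0] by (simp add: u_0 v_0 c_eq v_center_def algebra_simps)
  have "eta*g^2 * (1/12) \<le> eta*g^2 * (p + w/2)"
    using eta_pos g_pos p_ge w_nonneg by (intro mult_left_mono) auto
  moreover have "eta*g^2 * (p + w/2) \<le> eta*g^2 * (p + w/2 + eps)"
    using eta_pos g_pos by (intro mult_left_mono) auto
  moreover have "0 \<le> 2*eta*p*eps" using eta_pos p_ge by simp
  ultimately show ?thesis unfolding invariant_def u1 v1 by simp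
qed

lemma horizon_bounds:
  assumes "1 \<le> t" and "real t \<le> horizon"
  shows "g^2 * (real t - 1) \<le> 1/59" and "real t * eps \<le> 1/200"
proof -
  have "g^2 * (real t - 1) \<le> g^2 * (1 / (59*g^2))"
    using assms g_pos by (intro mult_left_mono) auto
  then show q: "g^2 * (real t - 1) \<le> 1/59" using g_pos by simp
  have "real t * eps \<le> real t * (g^2/12)" using exp_small by (intro mult_left_mono) auto
  also have "\<dots> = (g^2 * (real t - 1) + g^2) / 12" by (simp add: field_simps)
  also have "\<dots> \<le> 1/200" using q g_sq_le by simp
  finally show "real t * eps \<le> 1/200" .
qed

lemma margins_odd:
  assumes inv: "invariant t" and "1 \<le> t" and "odd t"
  shows "L \<le> u t + c * v t" and "u t - v t / 2 \<le> -L"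
proof -
  define r where "r = real t"
  have r: "1 \<le> r" using assms r_def by simp
  have u: "L \<le> u t" "u t \<le> eta*g^2 * (p*r + w/2 + r*eps)"
    using inv unfolding invariant_def r_def by auto
  have v: "eta*p * (4*g^2*r) - 2*eta*p*r*eps \<le> v t"
    using inv \<open>odd t\<close> unfolding invariant_def v_center_def r_def by (auto simp: abs_le_iff)
  have "1 \<le> 3*p*r" using mult_mono[of 1 "3*p" 1 r] p_ge r by simp
  then have "eta*g^2 * 1 \<le> eta*g^2 * (3*p*r)"
    using eta_pos by (intro mult_left_mono) auto
  also have "\<dots> = eta*p*r * (3*g^2)" by (simp add: algebra_simps)
  also have "\<dots> \<le> eta*p*r * (4*g^2 - 2*eps)"
  proof (rule mult_left_mono)
    show "3*g^2 \<le> 4*g^2 - 2*eps" using exp_small eps_pos by linarith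
  qed (use eta_pos p_ge r in simp)
  finally have "eta*g^2 \<le> v t" using v by (simp add: algebra_simps)
  then have "eta*g^2/2 \<le> c * v t"
    using mult_mono[OF c_bounds(1), of "eta*g^2" "v t"] c_bounds eta_pos by simp
  then show "L \<le> u t + c * v t" using u L_pos by linarith
  have "u t - v t / 2 \<le> eta*g^2 * (w/2 - p*r) + (eta*r) * (eps * (g^2 + p))"
    using u v by (simp add: algebra_simps)
  also have "\<dots> \<le> eta*g^2 * (-r/6) + (eta*r) * (g^2/12)"
  proof (rule add_mono)
    have "r/3 \<le> p*r" using mult_right_mono[OF p_ge, of r] r by simp
    then have "w/2 - p*r \<le> -r/6" using w_le r by linarith
    then show "eta*g^2 * (w/2 - p*r) \<le> eta*g^2 * (-r/6)" using eta_pos by (intro mult_left_mono) auto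
    have "eps * (g^2 + p) \<le> eps" by (rule mult_left_le) (use p_le g_sq_le in auto)
    then have "eps * (g^2 + p) \<le> g^2/12" using exp_small by linarith
    then show "(eta*r) * (eps * (g^2 + p)) \<le> (eta*r) * (g^2/12)"
      using eta_pos r by (intro mult_left_mono) auto
  qed
  also have "\<dots> \<le> -L" using r eta_pos g_pos by (simp add: field_simps)
  finally show "u t - v t / 2 \<le> -L" .
qed

lemma v_upper_even:
  assumes inv: "invariant t" and "1 \<le> t" and "even t" and "real t \<le> horizon"
  shows "v t \<le> -(2/5) * eta*p"
proof -
  have "v t \<le> eta*p * (4 * (g^2 * (real t - 1)) - 1/2 + 2 * (real t * eps))"
    using inv \<open>even t\<close> unfolding invariant_def v_center_def by (auto simp: abs_le_iff algebra_simps)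
  also have "\<dots> \<le> eta*p * (-2/5)"
    using horizon_bounds[OF \<open>1 \<le> t\<close> \<open>real t \<le> horizon\<close>] eta_pos p_ge by (intro mult_left_mono) auto
  finally show ?thesis by simp
qed

lemma u_upper_even:
  assumes inv: "invariant t" and "1 \<le> t" and "real t \<le> horizon"
  shows "u t \<le> eta*p/10"
proof -
  note q = horizon_bounds[OF \<open>1 \<le> t\<close> \<open>real t \<le> horizon\<close>]
  have "u t \<le> eta * (p * (g^2 * (real t - 1) + g^2) + g^2 * w / 2 + g^2 * (real t * eps))"
    using inv unfolding invariant_def by (simp add: algebra_simps)
  also have "\<dots> \<le> eta * (p/10)"
  proof (rule mult_left_mono)
    have "p * (g^2 * (real t - 1) + g^2) \<le> p * (1/20)" using q g_sq_le p_ge by (intro mult_left_mono) auto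
    moreover have "g^2 * w \<le> 1/36 * p" using g_sq_le w_le p_ge w_nonneg by (intro mult_mono) auto
    moreover have "g^2 * (real t * eps) \<le> 1/36 * (1/200)"
      using g_sq_le q(2) eps_pos \<open>1 \<le> t\<close> by (intro mult_mono) auto
    ultimately show "p * (g^2 * (real t - 1) + g^2) + g^2 * w / 2 + g^2 * (real t * eps) \<le> p/10"
      using p_ge by linarith
  qed (use eta_pos in simp)
  finally show ?thesis by simp
qed

lemma margins_even:
  assumes inv: "invariant t" and "1 \<le> t" and "even t" and "real t \<le> horizon"
  shows "u t + c * v t \<le> -L" and "L \<le> u t - v t / 2"
proof -
  have v: "v t \<le> -(2/5) * eta*p" using v_upper_even assms by blast
  have u: "L \<le> u t" "u t \<le> eta*p/10" using inv u_upper_even assms unfolding invariant_def by auto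
  have "eta*g^2 \<le> eta*(1/36)" "eta*(1/3) \<le> eta*p"
    using g_sq_le p_ge eta_pos by (intro mult_left_mono; simp)+
  then have "L \<le> eta*p/10" using eta_pos by linarith
  moreover have "v t \<le> 0" using v eta_p_pos by linarith
  moreover from this have "c * v t \<le> v t / 2"
    using mult_right_mono_neg[OF c_bounds(1), of "v t"] by simp
  ultimately show "u t + c * v t \<le> -L" and "L \<le> u t - v t / 2" using u v by linarith+
qed

lemma weights_saturated:
  assumes "invariant t" and "1 \<le> t" and "real t \<le> horizon"
  shows "\<bar>logistic_weight (u t + c * v t) - of_bool (even t)\<bar> \<le> eps
       \<and> \<bar>logistic_weight (u t - v t / 2) - of_bool (odd t)\<bar> \<le> eps"
proof (cases "even t")
  case True
  then show ?thesis using margins_even[OF assms(1,2) True assms(3)]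
    by (simp add: abs_logistic_weight_le_exp abs_logistic_weight_sub_one_le_exp)
next
  case False
  then show ?thesis using margins_odd[OF assms(1,2)]
    by (simp add: abs_logistic_weight_le_exp abs_logistic_weight_sub_one_le_exp)
qed

lemma u_Suc_bounds:
  assumes inv: "invariant t" and "1 \<le> t" and "real t \<le> horizon"
  shows "L \<le> u (Suc t) \<and> u (Suc t) \<le> eta*g^2 * (p * real (Suc t) + w/2 + real (Suc t) * eps)"
proof -
  define a where "a = logistic_weight (u t + c * v t)"
  define b where "b = logistic_weight (u t - v t / 2)"
  define e where "e = logistic_weight (u t)"
  have "a + b \<le> 1 + 2*eps"
    using weights_saturated[OF assms] unfolding a_def b_def by (cases "even t") (auto simp: abs_le_iff)
  then have "p * (a + b) \<le> p * (1 + 2*eps)" using p_ge by (intro mult_left_mono) auto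
  moreover have "L \<le> u t" using inv unfolding invariant_def by simp
  then have e: "0 \<le> e" "e \<le> eps"
    unfolding e_def by (auto intro: logistic_weight_nonneg logistic_weight_le_exp)
  then have "w * e \<le> w * eps" using w_nonneg by (intro mult_left_mono)
  ultimately have "p*a + p*b + w*e \<le> p + (2*p + w) * eps" by (simp add: algebra_simps)
  then have "p*a + p*b + w*e \<le> p + eps" using weights_sum by simp
  then have "eta*g^2 * (p*a + p*b + w*e) \<le> eta*g^2 * (p + eps)"
    using eta_pos by (intro mult_left_mono) auto
  moreover have "0 \<le> eta*g^2 * (p*a + p*b + w*e)"
    using eta_pos p_ge w_nonneg e unfolding a_def b_def by (simp add: logistic_weight_nonneg)
  moreover have "u (Suc t) = u t + eta*g^2 * (p*a + p*b + w*e)"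
    unfolding u_Suc a_def b_def e_def ..
  ultimately show ?thesis using inv unfolding invariant_def by (auto simp: algebra_simps)
qed

lemma v_Suc_near_center:
  assumes inv: "invariant t" and "1 \<le> t" and "real t \<le> horizon"
  shows "\<bar>v (Suc t) - v_center (Suc t)\<bar> \<le> 2*eta*p * real (Suc t) * eps"
proof -
  define a where "a = logistic_weight (u t + c * v t) - of_bool (even t)"
  define b where "b = logistic_weight (u t - v t / 2) - of_bool (odd t)"
  have a: "\<bar>a\<bar> \<le> eps" and b: "\<bar>b\<bar> \<le> eps"
    using weights_saturated[OF assms] unfolding a_def b_def by auto
  have "\<bar>c * a\<bar> \<le> 1 * eps" unfolding abs_mult using a c_bounds by (intro mult_mono) auto
  moreover have "\<bar>b / 2\<bar> \<le> eps/2" using b by simp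
  ultimately have "\<bar>c * a\<bar> + \<bar>b / 2\<bar> \<le> 2*eps" using eps_pos by linarith
  then have D: "\<bar>c * a - b / 2\<bar> \<le> 2*eps" using abs_triangle_ineq4 order_trans by blast
  have "v (Suc t) - v_center (Suc t) = (v t - v_center t) + eta*p * (c * a - b / 2)"
    unfolding v_Suc v_center_Suc a_def b_def by (simp add: field_simps)
  then have "\<bar>v (Suc t) - v_center (Suc t)\<bar> \<le> \<bar>v t - v_center t\<bar> + eta*p * \<bar>c * a - b / 2\<bar>"
    using abs_triangle_ineq abs_mult_pos'[of "eta*p"] eta_p_pos by simp
  also have "\<dots> \<le> 2*eta*p * real t * eps + eta*p * (2*eps)"
    using inv D eta_p_pos unfolding invariant_def by (intro add_mono mult_left_mono) auto
  also have "\<dots> = 2*eta*p * real (Suc t) * eps" by (simp add: algebra_simps)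
  finally show ?thesis .
qed

lemma invariant_Suc:
  "invariant t \<Longrightarrow> 1 \<le> t \<Longrightarrow> real t \<le> horizon \<Longrightarrow> invariant (Suc t)"
  using u_Suc_bounds v_Suc_near_center unfolding invariant_def[of "Suc t"] by blast

lemma invariant_holds:
  assumes "1 \<le> t" and "real t \<le> horizon"
  shows "invariant t"
  using assms
proof (induction t rule: nat_induct_at_least)
  case base
  show ?case by (rule invariant_one)
next
  case (Suc t)
  then show ?case using invariant_Suc by simp
qed

lemma min_margin_le:
  assumes "1 \<le> t" and "real t \<le> horizon"
  shows "min (u t + c * v t) (u t - v t / 2) \<le> -2"
proof -
  note inv = invariant_holds[OF assms]
  have "L \<ge> 2" using eta_large by simp
  then show ?thesis
    using margins_even[OF inv assms(1) _ assms(2)] margins_odd[OF inv assms(1)]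
    by (cases "even t") (simp_all add: min_le_iff_disj)
qed

end

lemma step_size_bounds:
  fixes g eta :: real
  assumes "0 < g" and "g \<le> 1/6" and "32 / g^2 * ln (3/g) \<le> eta"
  shows "24 \<le> eta*g^2" and "exp (-(eta*g^2/12)) \<le> g^2/12"
proof -
  have "exp (2::real) = exp 1 * exp 1" by (simp flip: exp_add)
  also have "\<dots> \<le> 2.72 * 2.72" using e_less_272 by (intro mult_mono) auto
  also have "\<dots> \<le> 3/g" using assms(1,2) by (simp add: field_simps)
  finally have ln_ge: "2 \<le> ln (3/g)" using assms(1) by (simp add: ln_ge_iff)
  have eta_ge: "32 * ln (3/g) \<le> eta*g^2"
    using mult_right_mono[OF assms(3), of "g^2"] assms(1) by simp
  then show "24 \<le> eta*g^2" using ln_ge by linarith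
  have "ln (12/g^2) = 2 * ln (3/g) + ln (4/3)"
  proof -
    have "12/g^2 = (3/g)^2 * (4/3)" by (simp add: power_divide)
    then show ?thesis using assms(1) by (simp only: ln_mult ln_realpow) simp_all
  qed
  moreover have "ln (4/3::real) \<le> 1/3" using ln_le_minus_one[of "4/3::real"] by simp
  ultimately have "ln (12/g^2) \<le> eta*g^2/12" using ln_ge eta_ge by linarith
  then have "exp (-(eta*g^2/12)) \<le> exp (- ln (12/g^2))" by simp
  also have "\<dots> = g^2/12" using assms(1) by (simp add: exp_minus)
  finally show "exp (-(eta*g^2/12)) \<le> g^2/12" .
qed

definition hard_dataset :: "real \<Rightarrow> nat \<Rightarrow> nat \<Rightarrow> nat \<Rightarrow> real" where
  "hard_dataset g n i =
     (if i < n div 2 then vec2 g (1/2 + 8*g^2)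
      else if i < 2 * (n div 2) then vec2 g (-1/2)
      else vec2 g 0)"

lemma sum_hard_dataset:
  "(\<Sum>i<n. f (hard_dataset g n i)) =
     real (n div 2) * (f (vec2 g (1/2 + 8*g^2)) + f (vec2 g (-1/2))) + real (n mod 2) * f (vec2 g 0)"
proof -
  define k where "k = n div 2"
  have "(\<Sum>i<n. f (hard_dataset g n i)) = (\<Sum>i\<in>{0..<k}. f (hard_dataset g n i))
      + (\<Sum>i\<in>{k..<2*k}. f (hard_dataset g n i)) + (\<Sum>i\<in>{2*k..<n}. f (hard_dataset g n i))"
    by (simp add: lessThan_atLeast0 sum.atLeastLessThan_concat k_def)
  also have "\<dots> = (\<Sum>i\<in>{0..<k}. f (vec2 g (1/2 + 8*g^2))) + (\<Sum>i\<in>{k..<2*k}. f (vec2 g (-1/2)))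
      + (\<Sum>i\<in>{2*k..<n}. f (vec2 g 0))"
    unfolding hard_dataset_def k_def by (intro arg_cong2[where f = "(+)"] sum.cong) auto
  also have "\<dots> = real k * (f (vec2 g (1/2 + 8*g^2)) + f (vec2 g (-1/2))) + real (n mod 2) * f (vec2 g 0)"
  proof -
    have mod2: "n - 2*k = n mod 2" unfolding k_def by (simp add: minus_div_mult_eq_mod[symmetric] mult.commute)
    show ?thesis unfolding mod2[symmetric] by (simp add: algebra_simps)
  qed
  finally show ?thesis unfolding k_def .
qed

lemma logloss_grad_hard_dataset:
  assumes "j < 2"
  shows "logloss_grad 2 n (hard_dataset g n) w j = -(1 / real n) *
    (real (n div 2) * (vec2 g (1/2 + 8*g^2) j * logistic_weight (g * w 0 + (1/2 + 8*g^2) * w 1)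
                       + vec2 g (-1/2) j * logistic_weight (g * w 0 - w 1 / 2))
     + real (n mod 2) * (vec2 g 0 j * logistic_weight (g * w 0)))"
proof -
  have "ip 2 w (vec2 g (1/2 + 8*g^2)) = g * w 0 + (1/2 + 8*g^2) * w 1"
    and "ip 2 w (vec2 g (-1/2)) = g * w 0 - w 1 / 2" and "ip 2 w (vec2 g 0) = g * w 0"
    by simp_all
  then show ?thesis
    unfolding logloss_grad_eq[OF assms] sum_hard_dataset[of "\<lambda>y. y j * logistic_weight (ip 2 w y)"]
    by simp
qed

lemma oscillating_gd_hard_dataset:
  fixes g eta :: real and n :: nat
  defines "x \<equiv> hard_dataset g n"
  assumes "0 < g" and "g \<le> 1/6" and "2 \<le> n"
    and "24 \<le> eta*g^2" and "exp (-(eta*g^2/12)) \<le> g^2/12"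
  shows "oscillating_gd g eta (real (n div 2) / real n) (real (n mod 2) / real n) (1/2 + 8*g^2)
           (\<lambda>t. g * gd 2 n x eta t 0) (\<lambda>t. gd 2 n x eta t 1)"
proof unfold_locales
  have n: "0 < real n" using assms(4) by simp
  have "n \<le> 3 * (n div 2)" using assms(4) by presburger
  then have "real n \<le> 3 * real (n div 2)" by linarith
  then show "1/3 \<le> real (n div 2) / real n" using n by (simp add: field_simps)
  have "2 * real (n div 2) + real (n mod 2) = real n"
    by (metis of_nat_add of_nat_mult of_nat_numeral div_mult_mod_eq mult.commute)
  then show "2 * (real (n div 2) / real n) + real (n mod 2) / real n = 1"
    using n by (simp add: field_simps)
  fix t
  let ?w = "gd 2 n x eta t"
  show "g * gd 2 n x eta (Suc t) 0 = g * ?w 0 + eta * g^2 * (real (n div 2) / real n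
      * logistic_weight (g * ?w 0 + (1/2 + 8*g^2) * ?w 1) + real (n div 2) / real n
      * logistic_weight (g * ?w 0 - ?w 1 / 2) + real (n mod 2) / real n * logistic_weight (g * ?w 0))"
    using n unfolding x_def gd.simps by (simp add: logloss_grad_hard_dataset field_simps power2_eq_square)
  show "gd 2 n x eta (Suc t) 1 = ?w 1 + eta * (real (n div 2) / real n)
      * ((1/2 + 8*g^2) * logistic_weight (g * ?w 0 + (1/2 + 8*g^2) * ?w 1)
         - logistic_weight (g * ?w 0 - ?w 1 / 2) / 2)"
    using n unfolding x_def gd.simps by (simp add: logloss_grad_hard_dataset field_simps)
qed (use assms in auto)

lemma hard_dataset_first_coord: "hard_dataset g n i 0 = g"
  unfolding hard_dataset_def by simp

lemma hard_dataset_norm_le: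
  assumes "0 < g" and "g \<le> 1/6"
  shows "vnorm 2 (hard_dataset g n i) \<le> 1"
proof -
  have "g^2 \<le> (1/6)^2" using assms by (intro power_mono) auto
  then have g2: "g^2 \<le> 1/36" by (simp add: power2_eq_square)
  then have "(1/2 + 8*g^2)^2 \<le> (13/18)^2" by (intro power_mono) auto
  with g2 assms show ?thesis
    unfolding hard_dataset_def by (simp add: vnorm_vec2 power2_eq_square)
qed

lemma hard_dataset_loss_large:
  fixes g eta :: real and n t :: nat
  defines "x \<equiv> hard_dataset g n"
  assumes "0 < g" and "g \<le> 1/6" and "2 \<le> n" and "real n \<le> eta"
    and eta: "24 \<le> eta*g^2" "exp (-(eta*g^2/12)) \<le> g^2/12"
    and "real t \<le> 1 + 1 / (59*g^2)"
  shows "2 / eta < logloss 2 n x (gd 2 n x eta t)"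
proof -
  interpret oscillating_gd g eta "real (n div 2) / real n" "real (n mod 2) / real n" "1/2 + 8*g^2"
      "\<lambda>t. g * gd 2 n x eta t 0" "\<lambda>t. gd 2 n x eta t 1"
    unfolding x_def using oscillating_gd_hard_dataset assms(2-4) eta .
  show ?thesis
  proof (cases "t = 0")
    case True
    have "ln (1/2::real) \<le> 1/2 - 1" by (rule ln_le_minus_one) auto
    then have "1/2 \<le> ln (2::real)" by (simp add: ln_div)
    then have "eta * (1/2) \<le> eta * ln 2" using eta_pos by (intro mult_left_mono) auto
    moreover have "eta * g^2 \<le> eta * (1/36)" using g_sq_le eta_pos by (intro mult_left_mono) auto
    ultimately have "2 < eta * ln 2" using eta(1) by linarith
    then have "2 / eta < ln 2" using eta_pos by (simp add: pos_divide_less_eq mult.commute)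
    then show ?thesis using True assms(4) by (simp add: logloss_zero)
  next
    case False
    let ?w = "gd 2 n x eta t"
    have "min (g * ?w 0 + (1/2 + 8*g^2) * ?w 1) (g * ?w 0 - ?w 1 / 2) \<le> -2"
      using min_margin_le False assms(8) by simp
    moreover have "x 0 = vec2 g (1/2 + 8*g^2)" and "x (n div 2) = vec2 g (-1/2)"
      unfolding x_def hard_dataset_def using assms(4) by auto
    ultimately have "ip 2 ?w (x 0) \<le> -2 \<or> ip 2 ?w (x (n div 2)) \<le> -2"
      by (simp add: min_le_iff_disj)
    moreover have "0 < n" and "n div 2 < n" using assms(4) by auto
    ultimately obtain i where "i < n" and "ip 2 ?w (x i) \<le> -2" by blast
    then have "2 / real n < logloss 2 n x ?w" by (rule logloss_gt_of_margin_le)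
    moreover have "2 / eta \<le> 2 / real n" using assms(4,5) by (simp add: frac_le)
    ultimately show ?thesis by linarith
  qed
qed

theorem lemma12:
  fixes \<gamma> \<eta> :: real and n :: nat
  assumes "0 < \<gamma>" and "\<gamma> \<le> 1/6"
    and "n \<ge> 2"
    and "\<eta> \<ge> max (real n) (32 / \<gamma>^2 * ln (3 / \<gamma>))"
  shows "\<exists>(d::nat) (x::nat \<Rightarrow> nat \<Rightarrow> real).
           (\<forall>i<n. vnorm d (x i) \<le> 1) \<and>
           lin_separable d n x \<and> max_margin d n x = \<gamma> \<and>
           (\<forall>t::nat. real t \<le> 1 + 1 / (59 * \<gamma>^2) \<longrightarrow>
              logloss d n x (gd d n x \<eta> t) > 2 / \<eta>)"
proof (intro exI conjI allI impI)
  let ?x = "hard_dataset \<gamma> n"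
  have "0 < n div 2" and "n div 2 < n" using assms(3) by auto
  moreover have "?x 0 1 = 1/2 + 8*\<gamma>^2" and "?x (n div 2) 1 = -1/2"
    unfolding hard_dataset_def using assms(3) by auto
  ultimately show "max_margin 2 n ?x = \<gamma>"
    using assms(1) hard_dataset_first_coord
    by (intro max_margin_of_first_coord[of _ _ _ 0 "n div 2"]) auto
  show "lin_separable 2 n ?x"
    using assms(1) hard_dataset_first_coord by (intro lin_separable_of_first_coord) auto
  show "vnorm 2 (?x i) \<le> 1" for i using assms(1,2) by (rule hard_dataset_norm_le)
  fix t :: nat
  assume "real t \<le> 1 + 1 / (59 * \<gamma>^2)"
  then show "2 / \<eta> < logloss 2 n ?x (gd 2 n ?x \<eta> t)"
    using assms step_size_bounds[OF assms(1,2)] by (intro hard_dataset_loss_large) auto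
qed

end
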